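(* For a threshold $h\ge0$, the AMC-$h$ policy is temporal Nash stable if and only if $h=0$.
   Context: Players: a finite set $N=\{a_1,\dots,a_n\}$. A characteristic function is $v:2^N\to\mathbb{R}_{\ge 0}$ with $v(\emptyset)=0$, monotone and bounded: $\mathsf{min}\le v(S)\le v(T)\le\mathsf{max}$ for all nonempty $S\subseteq T\subseteq N$, for fixed constants $0<\mathsf{min}\le\mathsf{max}$. Online process: an arrival order is a permutation $\pi=(\pi_1,\dots,\pi_n)$ of $N$; player $\pi_t$ arrives at time $t$; $\pi_{\prec t}$ is the set of players arriving before time $t$ and $\pi^{-1}(i)$ the arrival time of $i$. For $S\subseteq N$, $\pi_{|S}$ denotes the players of $S$ in the relative order of $\pi$. Let $C^{t-1}$ be the coalition structure of players arrived before time $t$ ($C^0=\emptyset$). At time $t$, player $\pi_t$ either joins an existing coalition $S\in C^{t-1}$ or forms $\{\pi_t\}$ (choice $S=\emptyset$); decisions are never revised. AMC-$h$ policy: when player $i$ joins coalition $S$, let $\mathsf{MC}_i=v((\pi_{\prec\pi^{-1}(i)}\cap S)\cup\{i\})-v(\pi_{\prec\pi^{-1}(i)}\cap S)$. If $\mathsf{MC}_i\le h$, all of $\mathsf{MC}_i$ is added to the share of the last player of $S$ who arrived before $i$; if $\mathsf{MC}_i>h$, that previous player additionally receives $h$ and $i$ receives $\mathsf{MC}_i-h$; if $i$ is the first player of her coalition, the "previous player" is $i$ herself. Shares already assigned are never reduced; $\varphi_i(S,\pi_{|S})$ is $i$'s accumulated share when the coalition is $S$. Greedy players: $\pi_t$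 chooses $S\in C^{t-1}\cup\{\emptyset\}$ maximizing $\varphi_{\pi_t}(S\cup\{\pi_t\},\pi_{|S\cup\{\pi_t\}})$ (predetermined tie-breaking). $C_g$ is the final structure; $\overline{C}_g^{t}\subseteq C_g$ is the set of final coalitions whose first-arriving member arrived at time at most $t$. Temporal Nash stability: for every $v$ and $\pi$, every $S\in C_g$ and every $i\in S$, there is no $S'\in\overline{C}_g^{\pi^{-1}(i)-1}\cup\{\emptyset\}$ with $\varphi_i(S'\cup\{i\},\pi_{|S'\cup\{i\}})>\varphi_i(S,\pi_{|S})$. *)

theory Defs
  imports Main Complex_Main
begin

text \<open>Players are natural numbers; an arrival order is a duplicate-free list
  sigma whose set is the player set N.\<close>

definition mc :: "(nat set \<Rightarrow> real) \<Rightarrow> nat list \<Rightarrow> nat \<Rightarrow> real" where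
  "mc v \<sigma> k = v (set (take (Suc k) \<sigma>)) - v (set (take k \<sigma>))"

text \<open>Amount given to player i by the arrival of the k-th member under AMC-h.\<close>

definition amc_gift :: "real \<Rightarrow> (nat set \<Rightarrow> real) \<Rightarrow> nat list \<Rightarrow> nat \<Rightarrow> nat \<Rightarrow> real" where
  "amc_gift h v \<sigma> k i =
     (if k = 0 then (if \<sigma> ! 0 = i then mc v \<sigma> 0 else 0)
      else (if \<sigma> ! (k - 1) = i then (if mc v \<sigma> k \<le> h then mc v \<sigma> k else h) else 0)
         + (if \<sigma> ! k = i then (if mc v \<sigma> k \<le> h then 0 else mc v \<sigma> k - h) else 0))"

definition amc_share :: "real \<Rightarrow> (nat set \<Rightarrow> real) \<Rightarrow> nat list \<Rightarrow> nat \<Rightarrow> real" where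
  "amc_share h v \<sigma> i = (\<Sum>k<length \<sigma>. amc_gift h v \<sigma> k i)"

definition restr :: "nat list \<Rightarrow> nat set \<Rightarrow> nat list" where
  "restr \<pi> S = filter (\<lambda>x. x \<in> S) \<pi>"

definition admissible :: "nat list \<Rightarrow> (nat set \<Rightarrow> real) \<Rightarrow> real \<Rightarrow> real \<Rightarrow> bool" where
  "admissible \<pi> v mn mx \<longleftrightarrow> v {} = 0 \<and> 0 < mn \<and> mn \<le> mx \<and>
     (\<forall>S T. S \<noteq> {} \<longrightarrow> S \<subseteq> T \<longrightarrow> T \<subseteq> set \<pi> \<longrightarrow> mn \<le> v S \<and> v S \<le> v T \<and> v T \<le> mx)"

text \<open>greedy h v pi t C: C is a coalition structure that greedy players can
  produce after the first t arrivals (with some predetermined tie-breaking).\<close>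

inductive greedy :: "real \<Rightarrow> (nat set \<Rightarrow> real) \<Rightarrow> nat list \<Rightarrow> nat \<Rightarrow> nat set set \<Rightarrow> bool"
  for h v \<pi> where
  start: "greedy h v \<pi> 0 {}"
| step: "\<lbrakk> greedy h v \<pi> t C; t < length \<pi>; S \<in> insert {} C;
           \<forall>S'\<in>insert {} C. amc_share h v (restr \<pi> (S' \<union> {\<pi> ! t})) (\<pi> ! t)
                              \<le> amc_share h v (restr \<pi> (S \<union> {\<pi> ! t})) (\<pi> ! t) \<rbrakk>
         \<Longrightarrow> greedy h v \<pi> (Suc t) (insert (S \<union> {\<pi> ! t}) (C - {S}))"

definition arr :: "nat list \<Rightarrow> nat \<Rightarrow> nat" where
  "arr \<pi> i = (LEAST k. k < length \<pi> \<and> \<pi> ! k = i)"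

definition temporal_nash_stable :: "real \<Rightarrow> bool" where
  "temporal_nash_stable h \<longleftrightarrow>
     (\<forall>\<pi> v mn mx Cg. distinct \<pi> \<longrightarrow> admissible \<pi> v mn mx \<longrightarrow> greedy h v \<pi> (length \<pi>) Cg \<longrightarrow>
        (\<forall>S\<in>Cg. \<forall>i\<in>S. \<not> (\<exists>S'\<in>{S'\<in>Cg. \<exists>j\<in>S'. arr \<pi> j < arr \<pi> i} \<union> {{}}.
            amc_share h v (restr \<pi> (S' \<union> {i})) i > amc_share h v (restr \<pi> S) i)))"

end

(* With h = 0 the AMC share of a player is exactly her marginal contribution to the members
   of her coalition who arrived before her: by monotonicity every later marginal contribution
   is nonnegative and hence goes entirely to the later player herself.  Later arrivals never
   change the part of a coalition that precedes a player, so the choice a greedy player made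
   on arrival stays optimal against every final coalition.  For h > 0 a later arrival hands up
   to h to its predecessor, so a player who stayed alone can regret it once another player
   joined the coalition she declined. *)
theory Submission
  imports Defs
begin

lemma arr_nth: "distinct \<pi> \<Longrightarrow> k < length \<pi> \<Longrightarrow> arr \<pi> (\<pi> ! k) = k"
  unfolding arr_def by (rule Least_equality) (auto simp: nth_eq_iff_index_eq leI)

lemma nth_notin_set_take: "distinct xs \<Longrightarrow> k < length xs \<Longrightarrow> xs ! k \<notin> set (take k xs)"
  by (auto simp: in_set_conv_nth nth_eq_iff_index_eq)

definition arrived_before :: "nat list \<Rightarrow> nat \<Rightarrow> nat set" where
  "arrived_before \<pi> i = set (take (arr \<pi> i) \<pi>)"

lemma arrived_before_nth:
  "distinct \<pi> \<Longrightarrow> k < length \<pi> \<Longrightarrow> arrived_before \<pi> (\<pi> ! k) = set (take k \<pi>)"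
  by (simp add: arrived_before_def arr_nth)

lemma arrived_before_subset_set_take:
  assumes "distinct \<pi>" "i \<in> set (take t \<pi>)"
  shows "arrived_before \<pi> i \<subseteq> set (take t \<pi>)"
proof -
  obtain k where "k < t" "k < length \<pi>" "\<pi> ! k = i"
    using assms(2) by (auto simp: in_set_conv_nth)
  then show ?thesis
    using arrived_before_nth[OF assms(1)] by (metis set_take_subset_set_take less_imp_le)
qed

lemma admissible_mono:
  "admissible \<pi> v mn mx \<Longrightarrow> S \<noteq> {} \<Longrightarrow> S \<subseteq> T \<Longrightarrow> T \<subseteq> set \<pi> \<Longrightarrow> v S \<le> v T"
  unfolding admissible_def by blast

lemma mc_nonneg:
  assumes "admissible \<pi> v mn mx" "set \<sigma> \<subseteq> set \<pi>" "0 < j" "j < length \<sigma>"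
  shows "0 \<le> mc v \<sigma> j"
proof -
  have "set (take j \<sigma>) \<noteq> {}"
    using assms(3,4) by (cases \<sigma>) auto
  moreover have "set (take j \<sigma>) \<subseteq> set (take (Suc j) \<sigma>)" "set (take (Suc j) \<sigma>) \<subseteq> set \<pi>"
    using assms(2) set_take_subset[of "Suc j" \<sigma>] by (auto simp: set_take_subset_set_take)
  ultimately have "v (set (take j \<sigma>)) \<le> v (set (take (Suc j) \<sigma>))"
    by (rule admissible_mono[OF assms(1)])
  then show ?thesis
    by (simp add: mc_def)
qed

lemma amc_share_zero_nth:
  assumes "distinct \<sigma>" "k < length \<sigma>"
    and mc_nonneg: "\<And>j. 0 < j \<Longrightarrow> j < length \<sigma> \<Longrightarrow> 0 \<le> mc v \<sigma> j"
  shows "amc_share 0 v \<sigma> (\<sigma> ! k) = mc v \<sigma> k"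
proof -
  have "amc_gift 0 v \<sigma> j (\<sigma> ! k) = (if j = k then mc v \<sigma> k else 0)" if "j < length \<sigma>" for j
  proof (cases "j = 0")
    case True
    then show ?thesis
      using that assms(1,2) by (auto simp: amc_gift_def nth_eq_iff_index_eq)
  next
    case False
    then have "0 \<le> mc v \<sigma> j"
      using that mc_nonneg by simp
    moreover have "\<sigma> ! (j - 1) = \<sigma> ! k \<longleftrightarrow> j - 1 = k" "\<sigma> ! j = \<sigma> ! k \<longleftrightarrow> j = k"
      using that assms(1,2) by (simp_all add: nth_eq_iff_index_eq)
    ultimately show ?thesis
      using False by (auto simp: amc_gift_def)
  qed
  then have "amc_share 0 v \<sigma> (\<sigma> ! k) = (\<Sum>j<length \<sigma>. if j = k then mc v \<sigma> k else 0)"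
    unfolding amc_share_def by (intro sum.cong) auto
  then show ?thesis
    using assms(2) by simp
qed

definition marginal :: "(nat set \<Rightarrow> real) \<Rightarrow> nat set \<Rightarrow> nat \<Rightarrow> real" where
  "marginal v A i = v (insert i A) - v A"

lemma amc_share_zero_restr:
  assumes "distinct \<pi>" "admissible \<pi> v mn mx" "X \<subseteq> set \<pi>" "i \<in> X"
  shows "amc_share 0 v (restr \<pi> X) i = marginal v (X \<inter> arrived_before \<pi> i) i"
proof -
  obtain k where k: "k < length \<pi>" "\<pi> ! k = i"
    using assms(3,4) by (metis subsetD in_set_conv_nth)
  define ys where "ys = filter (\<lambda>x. x \<in> X) (take k \<pi>)"
  have "restr \<pi> X = ys @ filter (\<lambda>x. x \<in> X) (drop k \<pi>)"
    unfolding restr_def ys_def by (metis append_take_drop_id filter_append)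
  also have "drop k \<pi> = i # drop (Suc k) \<pi>"
    using k by (metis Cons_nth_drop_Suc)
  finally have restr: "restr \<pi> X = ys @ i # filter (\<lambda>x. x \<in> X) (drop (Suc k) \<pi>)"
    using assms(4) by simp
  have "set ys = X \<inter> arrived_before \<pi> i"
    unfolding ys_def using arrived_before_nth[OF assms(1) k(1)] k(2) by auto
  moreover have "amc_share 0 v (restr \<pi> X) i = mc v (restr \<pi> X) (length ys)"
  proof -
    have "distinct (restr \<pi> X)" "set (restr \<pi> X) \<subseteq> set \<pi>"
      using assms(1) by (auto simp: restr_def)
    then show ?thesis
      using amc_share_zero_nth[of "restr \<pi> X" "length ys" v] mc_nonneg[OF assms(2)]
      by (simp add: restr)
  qed
  ultimately show ?thesis
    by (simp add: mc_def marginal_def restr)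
qed

lemma greedy_subset_set_take: "greedy h v \<pi> t C \<Longrightarrow> S \<in> C \<Longrightarrow> S \<subseteq> set (take t \<pi>)"
proof (induction arbitrary: S rule: greedy.induct)
  case start
  then show ?case by simp
next
  case (step t C S0)
  then have "S0 \<subseteq> set (take t \<pi>)"
    by blast
  moreover have "set (take (Suc t) \<pi>) = insert (\<pi> ! t) (set (take t \<pi>))"
    using step.hyps(2) by (simp add: take_Suc_conv_app_nth)
  ultimately show ?case
    using step.IH step.prems by (auto simp: set_take_subset_set_take)
qed

lemma greedy_zero_marginal_maximal:
  assumes "greedy 0 v \<pi> t C" "distinct \<pi>" "admissible \<pi> v mn mx"
    and "S \<in> C" "i \<in> S" "S' \<in> insert {} C"
  shows "marginal v (S' \<inter> arrived_before \<pi> i) i \<le> marginal v (S \<inter> arrived_before \<pi> i) i"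
  using assms(1,4-6)
proof (induction arbitrary: S i S' rule: greedy.induct)
  case start
  then show ?case by simp
next
  case (step t C S0)
  define x where "x = \<pi> ! t"
  define B where "B = set (take t \<pi>)"
  note prems = step.prems[folded x_def] and greedy_choice = step.hyps(4)[folded x_def]
  have x_notin_B: "x \<notin> B"
    unfolding x_def B_def using nth_notin_set_take[OF assms(2) step.hyps(2)] .
  have before_x: "arrived_before \<pi> x = B"
    unfolding x_def B_def using arrived_before_nth[OF assms(2) step.hyps(2)] .
  have C_sub_B: "T \<subseteq> B" if "T \<in> C" for T
    unfolding B_def using greedy_subset_set_take[OF step.hyps(1) that] .
  have S0_sub_B: "S0 \<subseteq> B"
    using step.hyps(3) C_sub_B by blast
  \<comment> \<open>the step only adds x, so restricted to the earlier players B each coalition is an old one\<close>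
  have trace: "T \<inter> B \<in> insert {} C" if "T \<in> insert {} (insert (S0 \<union> {x}) (C - {S0}))" for T
    using that step.hyps(3) C_sub_B x_notin_B by (auto simp: Int_absorb2)
  show ?case
  proof (cases "i = x")
    case True
    have "S = S0 \<union> {x}"
      using prems(1,2) C_sub_B x_notin_B True by auto
    then have "S \<inter> arrived_before \<pi> i = S0"
      using True before_x S0_sub_B x_notin_B by auto
    moreover have share: "amc_share 0 v (restr \<pi> (T \<union> {x})) x = marginal v T x" if "T \<subseteq> B" for T
    proof -
      have "(T \<union> {x}) \<inter> arrived_before \<pi> x = T"
        using that before_x x_notin_B by auto
      moreover have "T \<union> {x} \<subseteq> set \<pi>"
        using that step.hyps(2) unfolding B_def x_def by (auto dest: in_set_takeD)
      ultimately show ?thesis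
        using amc_share_zero_restr[OF assms(2,3), of "T \<union> {x}" x] by simp
    qed
    moreover have "marginal v (S' \<inter> B) x \<le> marginal v S0 x"
      using greedy_choice trace[OF prems(3)] share[of "S' \<inter> B"] share[OF S0_sub_B] by force
    ultimately show ?thesis
      using True before_x by simp
  next
    case False
    then have "i \<in> B"
      using prems(1,2) S0_sub_B C_sub_B by auto
    then have "arrived_before \<pi> i \<subseteq> B"
      unfolding B_def by (rule arrived_before_subset_set_take[OF assms(2)])
    then have "T \<inter> arrived_before \<pi> i = (T \<inter> B) \<inter> arrived_before \<pi> i" for T
      by auto
    moreover have "S \<inter> B \<in> C"
      using trace[of S] prems(1,2) \<open>i \<in> B\<close> by auto
    ultimately show ?thesis
      using step.IH[of "S \<inter> B" i "S' \<inter> B"] trace prems \<open>i \<in> B\<close> by simp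
  qed
qed

lemma temporal_nash_stable_zero: "temporal_nash_stable 0"
  unfolding temporal_nash_stable_def
proof (intro allI impI ballI notI)
  fix \<pi> v mn mx Cg S i
  assume distinct: "distinct \<pi>" and admissible: "admissible \<pi> v mn mx"
    and greedy: "greedy 0 v \<pi> (length \<pi>) Cg" and "S \<in> Cg" "i \<in> S"
    and "\<exists>S'\<in>{S' \<in> Cg. \<exists>j\<in>S'. arr \<pi> j < arr \<pi> i} \<union> {{}}.
           amc_share 0 v (restr \<pi> (S' \<union> {i})) i > amc_share 0 v (restr \<pi> S) i"
  then obtain S' where "S' \<in> insert {} Cg"
    and gain: "amc_share 0 v (restr \<pi> (S' \<union> {i})) i > amc_share 0 v (restr \<pi> S) i"
    by blast
  have Cg_sub: "T \<subseteq> set \<pi>" if "T \<in> Cg" for T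
    using greedy_subset_set_take[OF greedy that] by simp
  have "i \<notin> arrived_before \<pi> i"
    using Cg_sub \<open>S \<in> Cg\<close> \<open>i \<in> S\<close> distinct
    by (metis arrived_before_nth in_set_conv_nth nth_notin_set_take subsetD)
  then have "amc_share 0 v (restr \<pi> (S' \<union> {i})) i = marginal v (S' \<inter> arrived_before \<pi> i) i"
    using amc_share_zero_restr[OF distinct admissible, of "S' \<union> {i}" i]
      Cg_sub \<open>S' \<in> insert {} Cg\<close> \<open>S \<in> Cg\<close> \<open>i \<in> S\<close> by (auto simp: Int_Un_distrib2)
  moreover have "amc_share 0 v (restr \<pi> S) i = marginal v (S \<inter> arrived_before \<pi> i) i"
    using amc_share_zero_restr[OF distinct admissible] Cg_sub \<open>S \<in> Cg\<close> \<open>i \<in> S\<close> by simp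
  ultimately show False
    using gain greedy_zero_marginal_maximal[OF greedy distinct admissible \<open>S \<in> Cg\<close> \<open>i \<in> S\<close>
        \<open>S' \<in> insert {} Cg\<close>] by simp
qed

(* Under the order 0, 1, 2 player 1 stays alone (share h rather than h/2 next to 0) and
   player 2 joins 0 (share 2h rather than h alone or 0 next to 1); afterwards 1 would get
   3h/2 in {0, 1, 2}.  All greedy choices are strict. *)
definition deviation_game :: "real \<Rightarrow> nat set \<Rightarrow> real" where
  "deviation_game h S =
     (if S = {} then 0
      else h * (1 + (if 0 \<in> S \<and> 1 \<in> S then 3/2 else 0) + (if 0 \<in> S \<and> 2 \<in> S then 3 else 0)))"

lemma not_temporal_nash_stable_if_pos:
  assumes "h > 0"
  shows "\<not> temporal_nash_stable h"
proof
  assume stable: "temporal_nash_stable h"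
  let ?\<pi> = "[0, 1, 2 :: nat]" and ?v = "deviation_game h"
  note amc_simps = amc_share_def amc_gift_def restr_def mc_def deviation_game_def
    lessThan_Suc numeral_eq_Suc insert_commute
  have "greedy h ?v ?\<pi> 1 {{0}}"
    using greedy.step[OF greedy.start, of ?\<pi> "{}"] by simp
  from greedy.step[OF this, of "{}"] have "greedy h ?v ?\<pi> 2 {{1}, {0}}"
    using assms by (simp add: amc_simps)
  from greedy.step[OF this, of "{0}"] have outcome: "greedy h ?v ?\<pi> 3 {{0, 2}, {1}}"
    using assms by (simp add: amc_simps)
  have "admissible ?\<pi> ?v h (11/2 * h)"
    using assms unfolding admissible_def deviation_game_def by auto
  then have "\<not> (\<exists>S'\<in>{S' \<in> {{0, 2}, {1}}. \<exists>j\<in>S'. arr ?\<pi> j < arr ?\<pi> 1} \<union> {{}}.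
      amc_share h ?v (restr ?\<pi> (S' \<union> {1})) 1 > amc_share h ?v (restr ?\<pi> {1}) 1)"
    using stable[unfolded temporal_nash_stable_def, rule_format,
        of ?\<pi> ?v h "11/2 * h" "{{0, 2}, {1}}" "{1}" 1] outcome
    by (simp add: numeral_eq_Suc)
  moreover have "arr ?\<pi> 0 < arr ?\<pi> 1"
    using arr_nth[of ?\<pi> 0] arr_nth[of ?\<pi> 1] by simp
  moreover have "amc_share h ?v (restr ?\<pi> ({0, 2} \<union> {1})) 1 > amc_share h ?v (restr ?\<pi> {1}) 1"
    using assms by (simp add: amc_simps)
  ultimately show False
    by blast
qed

theorem proposition4:
  fixes h :: real
  assumes "h \<ge> 0"
  shows "temporal_nash_stable h \<longleftrightarrow> h = 0"
proof
  assume "temporal_nash_stable h"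
  then show "h = 0"
    using not_temporal_nash_stable_if_pos[of h] assms by fastforce
next
  assume "h = 0"
  then show "temporal_nash_stable h"
    using temporal_nash_stable_zero by simp
qed

end
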